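(* Let $q$ be a prime, $n\ge1$, and let $S \subset \mathbb{F}_q^n\times\mathbb{F}_q^n$ contain no three points of the form $(x,y),(x,y+d),(x+d,y')$ with $x,y,y'\in\mathbb{F}_q^n$, $d\in\mathbb{F}_q^n\setminus\{0\}$. Let $X\subset \mathbb{F}_q^n$ be the projection of $S$ onto the first coordinate and, for $x\in X$, let $C_x=\{y\in\mathbb{F}_q^n : (x,y)\in S\}$. Let $d\ge 0$ and let $P$ be a polynomial in $n$ variables over $\mathbb{F}_q$ that is a linear combination of monomials $x_1^{a_1}\cdots x_n^{a_n}$ with $0\le a_i\le q-1$ and $\sum a_i\le d$, and suppose $P$ vanishes at every point of $\mathbb{F}_q^n\setminus X$. Then for every $x\in X$ with $P(x)\neq 0$, $$|C_x| \le 2\, m_{d/2}(q,n),$$ where $m_{k}(q,n)$ denotes the number of monomials $x_1^{a_1}\cdots x_n^{a_n}$ with $0\le a_i\le q-1$ for all $i$ and $a_1+\dots+a_n\le k$. *)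

theory Defs
  imports "HOL-Analysis.Analysis"
begin

definition reduced_monos :: "nat \<Rightarrow> nat \<Rightarrow> (nat ^ 'n) set" where
  "reduced_monos q d = {a. (\<forall>i. a $ i \<le> q - 1) \<and> (\<Sum>i\<in>UNIV. a $ i) \<le> d}"

definition poly_eval :: "nat \<Rightarrow> nat \<Rightarrow> (nat ^ 'n \<Rightarrow> 'a::comm_ring_1) \<Rightarrow> 'a ^ 'n \<Rightarrow> 'a" where
  "poly_eval q d c x = (\<Sum>a\<in>reduced_monos q d. c a * (\<Prod>i\<in>UNIV. (x $ i) ^ (a $ i)))"

definition m_count :: "real \<Rightarrow> nat \<Rightarrow> nat \<Rightarrow> nat" where
  "m_count k q n = card {a :: nat \<Rightarrow> nat. (\<forall>i<n. a i \<le> q - 1) \<and> (\<forall>i\<ge>n. a i = 0)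
                                 \<and> real (\<Sum>i<n. a i) \<le> k}"

end

theory Submission
  imports Defs
begin

text \<open>Fix \<open>x\<close> with \<open>P(x) \<noteq> 0\<close> and put \<open>F(a, b) = P(x + a - b)\<close> for \<open>a, b \<in> C\<^sub>x\<close>. If \<open>a \<noteq> b\<close>,
  the points \<open>(x, b)\<close>, \<open>(x, b + (a - b))\<close> of \<open>S\<close> force \<open>x + (a - b) \<notin> X\<close> by corner-freeness, so
  \<open>F\<close> is diagonal with diagonal entries \<open>P(x) \<noteq> 0\<close>. Expanding \<open>P(x + a - b)\<close>, every monomial of
  degree at most \<open>d\<close> splits into a monomial in \<open>a\<close> times a monomial in \<open>b\<close>, one of which has degree
  at most \<open>d/2\<close>; hence \<open>F\<close> has slice rank at most \<open>2 m\<^sub>d\<^sub>/\<^sub>2\<close>. Instead of rank we count: every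
  \<open>v : C\<^sub>x \<rightarrow> \<bbbF>\<^sub>q\<close> is recovered as \<open>P(x)\<^sup>-\<^sup>1 \<Sum>\<^sub>b F(\<cdot>, b) v(b)\<close>, which is determined by \<open>2 m\<^sub>d\<^sub>/\<^sub>2\<close>
  field elements, so \<open>q\<^bsup>|C\<^sub>x|\<^esup> \<le> q\<^bsup>2 m\<^sub>d\<^sub>/\<^sub>2\<^esup>\<close>.\<close>

lemma sum_split_by_index:
  assumes "finite I" "finite M" "\<And>s. s \<in> I \<Longrightarrow> \<alpha> s \<in> M \<or> \<beta> s \<in> M"
  shows "(\<Sum>s\<in>I. f s) = (\<Sum>m\<in>M. \<Sum>s\<in>{s\<in>I. \<alpha> s = m}. f s)
                        + (\<Sum>m\<in>M. \<Sum>s\<in>{s\<in>I. \<alpha> s \<notin> M \<and> \<beta> s = m}. f s)"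
proof -
  let ?I\<^sub>1 = "{s\<in>I. \<alpha> s \<in> M}" and ?I\<^sub>2 = "{s\<in>I. \<alpha> s \<notin> M}"
  have "(\<Sum>s\<in>I. f s) = (\<Sum>s\<in>?I\<^sub>1. f s) + (\<Sum>s\<in>?I\<^sub>2. f s)"
    using sum.Int_Diff[OF assms(1), of f "{s. \<alpha> s \<in> M}"] by (simp add: Int_def set_diff_eq)
  also have "(\<Sum>s\<in>?I\<^sub>1. f s) = (\<Sum>m\<in>M. \<Sum>s\<in>{s'\<in>?I\<^sub>1. \<alpha> s' = m}. f s)"
    by (rule sum.group[symmetric]) (use assms in auto)
  also have "\<dots> = (\<Sum>m\<in>M. \<Sum>s\<in>{s\<in>I. \<alpha> s = m}. f s)"
    by (intro sum.cong) auto
  also have "(\<Sum>s\<in>?I\<^sub>2. f s) = (\<Sum>m\<in>M. \<Sum>s\<in>{s'\<in>?I\<^sub>2. \<beta> s' = m}. f s)"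
    by (rule sum.group[symmetric]) (use assms in auto)
  also have "\<dots> = (\<Sum>m\<in>M. \<Sum>s\<in>{s\<in>I. \<alpha> s \<notin> M \<and> \<beta> s = m}. f s)"
    by (intro sum.cong) auto
  finally show ?thesis .
qed

lemma card_le_of_functions_parametrized:
  fixes \<Phi> :: "('m \<Rightarrow> 'a) \<times> ('m \<Rightarrow> 'a) \<Rightarrow> 'c \<Rightarrow> 'a::{finite,zero_neq_one}"
  assumes "finite C" "finite M"
    and "PiE C (\<lambda>_. UNIV) \<subseteq> \<Phi> ` (PiE M (\<lambda>_. UNIV) \<times> PiE M (\<lambda>_. UNIV))"
  shows "card C \<le> 2 * card M"
proof -
  have "CARD('a) ^ card C = card (PiE C (\<lambda>_. UNIV :: 'a set))"
    using assms(1) by (simp add: card_PiE)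
  also have "\<dots> \<le> card (\<Phi> ` (PiE M (\<lambda>_. UNIV) \<times> PiE M (\<lambda>_. UNIV)))"
    by (rule card_mono[OF _ assms(3)]) (use assms(2) in \<open>simp add: finite_PiE\<close>)
  also have "\<dots> \<le> card (PiE M (\<lambda>_. UNIV :: 'a set) \<times> PiE M (\<lambda>_. UNIV :: 'a set))"
    by (rule card_image_le) (use assms(2) in \<open>simp add: finite_PiE\<close>)
  also have "\<dots> = CARD('a) ^ (2 * card M)"
    using assms(2) by (simp add: card_PiE card_cartesian_product mult_2 power_add)
  finally have "CARD('a) ^ card C \<le> CARD('a) ^ (2 * card M)" .
  moreover have "1 < CARD('a)"
  proof -
    have "card {0::'a, 1} \<le> CARD('a)"
      by (rule card_mono) simp_all
    thus ?thesis by simp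
  qed
  ultimately show ?thesis by (rule power_le_imp_le_exp[rotated])
qed

lemma card_le_of_diagonal_split_decomposition:
  fixes F :: "'c \<Rightarrow> 'c \<Rightarrow> 'a::{field,finite}" and u :: "'m \<Rightarrow> 'c \<Rightarrow> 'a"
  assumes "finite C" "finite I" "finite M" "z \<noteq> 0"
    and diag: "\<And>a b. a \<in> C \<Longrightarrow> b \<in> C \<Longrightarrow> F a b = (if a = b then z else 0)"
    and decomp: "\<And>a b. a \<in> C \<Longrightarrow> b \<in> C \<Longrightarrow> F a b = (\<Sum>s\<in>I. w s * u (\<alpha> s) a * u (\<beta> s) b)"
    and split: "\<And>s. s \<in> I \<Longrightarrow> \<alpha> s \<in> M \<or> \<beta> s \<in> M"
  shows "card C \<le> 2 * card M"
proof (rule card_le_of_functions_parametrized[OF \<open>finite C\<close> \<open>finite M\<close>])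
  define h where "h m a = (\<Sum>s\<in>{s\<in>I. \<alpha> s \<notin> M \<and> \<beta> s = m}. w s * u (\<alpha> s) a)" for m a
  define \<Phi> where "\<Phi> = (\<lambda>(l, r). \<lambda>a\<in>C. inverse z * ((\<Sum>m\<in>M. u m a * l m) + (\<Sum>m\<in>M. h m a * r m)))"
  show "PiE C (\<lambda>_. UNIV) \<subseteq> \<Phi> ` (PiE M (\<lambda>_. UNIV) \<times> PiE M (\<lambda>_. UNIV))"
  proof
    fix v assume v: "v \<in> PiE C (\<lambda>_. UNIV :: 'a set)"
    define r where "r m = (\<Sum>b\<in>C. u m b * v b)" for m
    define l where "l m = (\<Sum>s\<in>{s\<in>I. \<alpha> s = m}. w s * r (\<beta> s))" for m
    have "z * v a = (\<Sum>m\<in>M. u m a * l m) + (\<Sum>m\<in>M. h m a * r m)" if a: "a \<in> C" for a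
    proof -
      have "(\<Sum>b\<in>C. F a b * v b) = (\<Sum>b\<in>C. if a = b then z * v b else 0)"
        using a by (intro sum.cong) (auto simp: diag)
      hence "z * v a = (\<Sum>b\<in>C. F a b * v b)"
        using a \<open>finite C\<close> by simp
      also have "\<dots> = (\<Sum>b\<in>C. \<Sum>s\<in>I. w s * u (\<alpha> s) a * (u (\<beta> s) b * v b))"
        using a by (intro sum.cong refl) (simp add: decomp sum_distrib_right mult.assoc)
      also have "\<dots> = (\<Sum>s\<in>I. w s * u (\<alpha> s) a * r (\<beta> s))"
        by (subst sum.swap) (simp add: r_def sum_distrib_left)
      also have "\<dots> = (\<Sum>m\<in>M. \<Sum>s\<in>{s\<in>I. \<alpha> s = m}. w s * u (\<alpha> s) a * r (\<beta> s))
          + (\<Sum>m\<in>M. \<Sum>s\<in>{s\<in>I. \<alpha> s \<notin> M \<and> \<beta> s = m}. w s * u (\<alpha> s) a * r (\<beta> s))"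
        by (rule sum_split_by_index[OF \<open>finite I\<close> \<open>finite M\<close> split])
      also have "\<dots> = (\<Sum>m\<in>M. u m a * l m) + (\<Sum>m\<in>M. h m a * r m)"
        by (intro arg_cong2[where f="(+)"] sum.cong refl)
          (auto simp: l_def h_def sum_distrib_left sum_distrib_right mult_ac intro!: sum.cong)
      finally show ?thesis .
    qed
    hence "v = \<Phi> (restrict l M, restrict r M)"
      using v \<open>z \<noteq> 0\<close>
      by (intro ext) (auto simp: \<Phi>_def PiE_def extensional_def field_simps cong: sum.cong)
    thus "v \<in> \<Phi> ` (PiE M (\<lambda>_. UNIV) \<times> PiE M (\<lambda>_. UNIV))" by auto
  qed
qed

definition exp_pairs :: "nat \<Rightarrow> (nat \<times> nat) set" where
  "exp_pairs g = Sigma {..g} (\<lambda>j. {..g - j})"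

definition trinomial_coeff :: "'a::comm_ring_1 \<Rightarrow> nat \<Rightarrow> nat \<times> nat \<Rightarrow> 'a" where
  "trinomial_coeff x g jl =
     of_nat (g choose fst jl) * of_nat ((g - fst jl) choose snd jl) * (-1) ^ snd jl
       * x ^ (g - fst jl - snd jl)"

lemma finite_exp_pairs: "finite (exp_pairs g)"
  by (simp add: exp_pairs_def)

lemma exp_pairs_sum_le: "jl \<in> exp_pairs g \<Longrightarrow> fst jl + snd jl \<le> g"
  by (auto simp: exp_pairs_def)

lemma power_add_diff_expansion:
  fixes x a b :: "'a::comm_ring_1"
  shows "(x + a - b) ^ g = (\<Sum>jl\<in>exp_pairs g. trinomial_coeff x g jl * a ^ fst jl * b ^ snd jl)"
proof -
  have "(x + a - b) ^ g = (a + (-b + x)) ^ g"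
    by (simp add: algebra_simps)
  also have "\<dots> = (\<Sum>j\<le>g. of_nat (g choose j) * a ^ j * (-b + x) ^ (g - j))"
    by (rule binomial_ring)
  also have "\<dots> = (\<Sum>j\<le>g. \<Sum>l\<le>g - j. trinomial_coeff x g (j, l) * a ^ j * b ^ l)"
  proof (intro sum.cong refl)
    fix j
    show "of_nat (g choose j) * a ^ j * (-b + x) ^ (g - j)
        = (\<Sum>l\<le>g - j. trinomial_coeff x g (j, l) * a ^ j * b ^ l)"
      unfolding binomial_ring[of "-b" x "g - j"] sum_distrib_left
      by (intro sum.cong refl) (simp add: trinomial_coeff_def power_minus[of b] mult_ac)
  qed
  also have "\<dots> = (\<Sum>jl\<in>exp_pairs g. trinomial_coeff x g jl * a ^ fst jl * b ^ snd jl)"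
    unfolding exp_pairs_def by (subst sum.Sigma) (auto simp: case_prod_unfold)
  finally show ?thesis .
qed

definition monomial :: "nat ^ 'n \<Rightarrow> 'a::comm_ring_1 ^ 'n \<Rightarrow> 'a" where
  "monomial e a = (\<Prod>i\<in>UNIV. (a $ i) ^ (e $ i))"

text \<open>A term of the expansion of \<open>P(x + a - b)\<close> is indexed by a monomial \<open>\<gamma>\<close> of \<open>P\<close> together
  with, for each coordinate \<open>i\<close>, the exponents of \<open>a$i\<close> and \<open>b$i\<close> picked from
  \<open>(x$i + a$i - b$i)^\<gamma>$i\<close>.\<close>
definition expansion_index :: "nat \<Rightarrow> nat \<Rightarrow> ((nat ^ 'n) \<times> ('n \<Rightarrow> nat \<times> nat)) set" where
  "expansion_index q d = Sigma (reduced_monos q d) (\<lambda>\<gamma>. PiE UNIV (\<lambda>i. exp_pairs (\<gamma> $ i)))"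

definition left_exps :: "(nat ^ 'n) \<times> ('n \<Rightarrow> nat \<times> nat) \<Rightarrow> nat ^ 'n" where
  "left_exps s = (\<chi> i. fst (snd s i))"

definition right_exps :: "(nat ^ 'n) \<times> ('n \<Rightarrow> nat \<times> nat) \<Rightarrow> nat ^ 'n" where
  "right_exps s = (\<chi> i. snd (snd s i))"

definition expansion_coeff ::
    "'a::comm_ring_1 ^ 'n \<Rightarrow> (nat ^ 'n \<Rightarrow> 'a) \<Rightarrow> (nat ^ 'n) \<times> ('n \<Rightarrow> nat \<times> nat) \<Rightarrow> 'a" where
  "expansion_coeff x c s = c (fst s) * (\<Prod>i\<in>UNIV. trinomial_coeff (x $ i) (fst s $ i) (snd s i))"

lemma finite_bounded_vec: "finite {a :: nat ^ 'n::finite. \<forall>i. a $ i \<le> K}"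
proof (rule finite_subset)
  show "{a :: nat ^ 'n. \<forall>i. a $ i \<le> K} \<subseteq> vec_lambda ` PiE UNIV (\<lambda>_. {..K})"
  proof
    fix a :: "nat ^ 'n" assume "a \<in> {a. \<forall>i. a $ i \<le> K}"
    hence "(\<lambda>i. a $ i) \<in> PiE UNIV (\<lambda>_. {..K})" by auto
    thus "a \<in> vec_lambda ` PiE UNIV (\<lambda>_. {..K})"
      by (metis vec_lambda_eta image_eqI)
  qed
qed (simp add: finite_PiE)

lemma finite_reduced_monos: "finite (reduced_monos q d :: (nat ^ 'n::finite) set)"
  by (rule finite_subset[OF _ finite_bounded_vec[of "q - 1"]]) (auto simp: reduced_monos_def)

lemma finite_expansion_index: "finite (expansion_index q d :: ((nat ^ 'n::finite) \<times> _) set)"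
  unfolding expansion_index_def
  by (intro finite_SigmaI) (auto simp: finite_reduced_monos finite_PiE finite_exp_pairs)

lemma poly_eval_add_diff_expansion:
  fixes c :: "nat ^ 'n \<Rightarrow> 'a::comm_ring_1" and x a b :: "'a ^ 'n"
  shows "poly_eval q d c (x + a - b) =
    (\<Sum>s\<in>expansion_index q d.
       expansion_coeff x c s * monomial (left_exps s) a * monomial (right_exps s) b)"
proof -
  have "poly_eval q d c (x + a - b)
      = (\<Sum>\<gamma>\<in>reduced_monos q d. c \<gamma> * (\<Prod>i\<in>UNIV. (x $ i + a $ i - b $ i) ^ (\<gamma> $ i)))"
    by (simp add: poly_eval_def)
  also have "\<dots> = (\<Sum>\<gamma>\<in>reduced_monos q d. c \<gamma> * (\<Sum>p\<in>PiE UNIV (\<lambda>i. exp_pairs (\<gamma> $ i)).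
      \<Prod>i\<in>UNIV. trinomial_coeff (x $ i) (\<gamma> $ i) (p i) * a $ i ^ fst (p i) * b $ i ^ snd (p i)))"
    by (simp add: power_add_diff_expansion prod_sum_PiE finite_exp_pairs)
  also have "\<dots> = (\<Sum>\<gamma>\<in>reduced_monos q d. \<Sum>p\<in>PiE UNIV (\<lambda>i. exp_pairs (\<gamma> $ i)).
      expansion_coeff x c (\<gamma>, p) * monomial (left_exps (\<gamma>, p)) a * monomial (right_exps (\<gamma>, p)) b)"
    unfolding sum_distrib_left
    by (simp only: expansion_coeff_def monomial_def left_exps_def right_exps_def prod.distrib
        vec_lambda_beta fst_conv snd_conv mult.assoc)
  also have "\<dots> = (\<Sum>s\<in>expansion_index q d.
      expansion_coeff x c s * monomial (left_exps s) a * monomial (right_exps s) b)"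
    unfolding expansion_index_def
    by (subst sum.Sigma) (auto simp: finite_reduced_monos finite_PiE finite_exp_pairs case_prod_unfold)
  finally show ?thesis .
qed

lemma expansion_exps_half_degree:
  assumes "s \<in> expansion_index q d"
  shows "left_exps s \<in> reduced_monos q (d div 2) \<or> right_exps s \<in> reduced_monos q (d div 2)"
proof -
  obtain \<gamma> p where s: "s = (\<gamma>, p)" and \<gamma>: "\<gamma> \<in> reduced_monos q d"
    and p: "p \<in> PiE UNIV (\<lambda>i. exp_pairs (\<gamma> $ i))"
    using assms by (auto simp: expansion_index_def)
  have split_le: "left_exps s $ i + right_exps s $ i \<le> \<gamma> $ i" for i
    using p exp_pairs_sum_le by (fastforce simp: s left_exps_def right_exps_def)
  have "(\<Sum>i\<in>UNIV. left_exps s $ i) + (\<Sum>i\<in>UNIV. right_exps s $ i) \<le> (\<Sum>i\<in>UNIV. \<gamma> $ i)"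
    unfolding sum.distrib[symmetric] by (rule sum_mono) (rule split_le)
  also have "\<dots> \<le> d"
    using \<gamma> by (simp add: reduced_monos_def)
  finally have "(\<Sum>i\<in>UNIV. left_exps s $ i) \<le> d div 2 \<or> (\<Sum>i\<in>UNIV. right_exps s $ i) \<le> d div 2"
    by linarith
  moreover have "left_exps s $ i \<le> q - 1" "right_exps s $ i \<le> q - 1" for i
    using split_le[of i] \<gamma> unfolding reduced_monos_def by (fastforce dest: spec[of _ i])+
  ultimately show ?thesis
    by (auto simp: reduced_monos_def)
qed

lemma finite_bounded_funs_supported_lessThan:
  "finite {a :: nat \<Rightarrow> nat. (\<forall>i<n. a i \<le> K) \<and> (\<forall>i\<ge>n. a i = 0)}"
proof (rule finite_subset)
  show "{a. (\<forall>i<n. a i \<le> K) \<and> (\<forall>i\<ge>n. a i = 0)}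
      \<subseteq> (\<lambda>g i. if i < n then g i else 0) ` PiE {..<n} (\<lambda>_. {..K})"
  proof
    fix a :: "nat \<Rightarrow> nat" assume a: "a \<in> {a. (\<forall>i<n. a i \<le> K) \<and> (\<forall>i\<ge>n. a i = 0)}"
    hence "a = (\<lambda>i. if i < n then restrict a {..<n} i else 0)"
      by auto
    moreover have "restrict a {..<n} \<in> PiE {..<n} (\<lambda>_. {..K})"
      using a by auto
    ultimately show "a \<in> (\<lambda>g i. if i < n then g i else 0) ` PiE {..<n} (\<lambda>_. {..K})"
      by blast
  qed
qed (simp add: finite_PiE)

lemma card_reduced_monos_le_m_count:
  assumes "real k \<le> r"
  shows "card (reduced_monos q k :: (nat ^ 'n::finite) set) \<le> m_count r q CARD('n)"
proof -
  let ?n = "CARD('n)"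
  obtain e where e: "bij_betw e {..<?n} (UNIV :: 'n set)"
    using ex_bij_betw_nat_finite[of "UNIV :: 'n set"] by (auto simp: atLeast0LessThan)
  define f where "f a = (\<lambda>k. if k < ?n then a $ e k else 0)" for a :: "nat ^ 'n"
  define B where "B = {a :: nat \<Rightarrow> nat. (\<forall>i<?n. a i \<le> q - 1) \<and> (\<forall>i\<ge>?n. a i = 0)
                         \<and> real (\<Sum>i<?n. a i) \<le> r}"
  have sum_f: "(\<Sum>k<?n. f a k) = (\<Sum>i\<in>UNIV. a $ i)" for a
    by (simp add: f_def sum.reindex_bij_betw[OF e])
  have "card (reduced_monos q k :: (nat ^ 'n) set) \<le> card B"
  proof (rule card_inj_on_le)
    show "inj_on f (reduced_monos q k)"
    proof (rule inj_onI)
      fix a a' :: "nat ^ 'n" assume eq: "f a = f a'"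
      show "a = a'"
      proof (rule vec_eq_iff[THEN iffD2], rule allI)
        fix i
        obtain j where "j < ?n" "e j = i"
          using e unfolding bij_betw_def by (metis UNIV_I imageE lessThan_iff)
        thus "a $ i = a' $ i"
          using fun_cong[OF eq, of j] by (simp add: f_def)
      qed
    qed
    show "f ` reduced_monos q k \<subseteq> B"
    proof
      fix y assume "y \<in> f ` reduced_monos q k"
      then obtain a where a: "a \<in> reduced_monos q k" and y: "y = f a"
        by blast
      have "(\<Sum>j<?n. f a j) \<le> k"
        using a by (simp add: sum_f reduced_monos_def)
      hence "real (\<Sum>j<?n. f a j) \<le> r"
        using assms by (meson of_nat_le_iff order_trans)
      moreover have "\<forall>j<?n. f a j \<le> q - 1" "\<forall>j\<ge>?n. f a j = 0"
        using a by (auto simp: f_def reduced_monos_def)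
      ultimately show "y \<in> B"
        by (simp add: B_def y)
    qed
    show "finite B"
      by (rule finite_subset[OF _ finite_bounded_funs_supported_lessThan[of ?n "q - 1"]]) (auto simp: B_def)
  qed
  thus ?thesis
    by (simp add: m_count_def B_def)
qed

lemma corner_free_add_diff_notin_projection:
  fixes S :: "('a::ab_group_add \<times> 'a) set"
  assumes no_corner: "\<not> (\<exists>x y y' e. e \<noteq> 0 \<and> (x, y) \<in> S \<and> (x, y + e) \<in> S \<and> (x + e, y') \<in> S)"
    and "(x, a) \<in> S" "(x, b) \<in> S" "a \<noteq> b"
  shows "x + a - b \<notin> fst ` S"
proof
  assume "x + a - b \<in> fst ` S"
  then obtain y' where "(x + (a - b), y') \<in> S"
    by (force simp: add_diff_eq)
  moreover have "(x, b + (a - b)) \<in> S" "a - b \<noteq> 0"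
    using assms(2,4) by simp_all
  ultimately show False
    using no_corner assms(3) by blast
qed

theorem mainTheorem5:
  fixes S :: "(('a::{field,finite} ^ 'n) \<times> ('a ^ 'n)) set"
    and q d :: nat
    and c :: "nat ^ 'n \<Rightarrow> 'a"
  assumes q_prime: "prime q"
    and card_field: "CARD('a) = q"
    and no_corner: "\<not> (\<exists>x y y' e. e \<noteq> 0 \<and> (x, y) \<in> S \<and> (x, y + e) \<in> S \<and> (x + e, y') \<in> S)"
    and vanish: "\<forall>z. z \<notin> fst ` S \<longrightarrow> poly_eval q d c z = 0"
  shows "\<forall>x \<in> fst ` S. poly_eval q d c x \<noteq> 0 \<longrightarrow>
           real (card {y. (x, y) \<in> S}) \<le> 2 * real (m_count (real d / 2) q CARD('n))"
proof (intro ballI impI)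
  fix x assume "x \<in> fst ` S" and Px: "poly_eval q d c x \<noteq> 0"
  let ?P = "poly_eval q d c" and ?M = "reduced_monos q (d div 2) :: (nat ^ 'n) set"
  have "card {y. (x, y) \<in> S} \<le> 2 * card ?M"
  proof (rule card_le_of_diagonal_split_decomposition
      [where F = "\<lambda>a b. ?P (x + a - b)" and z = "?P x" and I = "expansion_index q d"
        and w = "expansion_coeff x c" and u = monomial and \<alpha> = left_exps and \<beta> = right_exps])
    show "?P (x + a - b) = (if a = b then ?P x else 0)"
      if "a \<in> {y. (x, y) \<in> S}" "b \<in> {y. (x, y) \<in> S}" for a b
      using that vanish corner_free_add_diff_notin_projection[OF no_corner] by auto
  qed (simp_all add: Px finite_expansion_index finite_reduced_monos
      poly_eval_add_diff_expansion expansion_exps_half_degree)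
  also have "card ?M \<le> m_count (real d / 2) q CARD('n)"
    by (rule card_reduced_monos_le_m_count) simp
  finally show "real (card {y. (x, y) \<in> S}) \<le> 2 * real (m_count (real d / 2) q CARD('n))"
    by linarith
qed

end
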